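(* Let $G$ be a connected (finite, simple) graph with $\beta(G)=|E|-\operatorname{rank}(E)=2$. Then $G$ is uniformly dense if and only if $G$ can be constructed from three paths, of lengths $L_1,L_2,L_3\ge 0$, by identifying their starting vertices into a single vertex and their end vertices into a single vertex, where the lengths satisfy $L_3-L_2\le L_1\le L_2\le L_3$.
   Context: For a graph $G=(V,E)$ and $A\subseteq E$, $c(A)$ denotes the number of connected components of $(V,A)$, $\operatorname{rank}(A)=|V|-c(A)$ (the rank in the cycle matroid, whose bases are spanning trees), and $\rho(A)=|A|/\operatorname{rank}(A)$ for nonempty $A$. $G$ is uniformly dense if $\rho(A)\le\rho(E)$ for all nonempty $A\subseteq E$. A path of length $0$ is a single vertex (so its two ends coincide). *)

theory Defs
  imports Main "HOL-Library.Disjoint_Sets" Complex_Main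
begin

definition simple_graph :: "'a set \<Rightarrow> 'a set set \<Rightarrow> bool" where
  "simple_graph V E \<longleftrightarrow> finite V \<and>
     (\<forall>e\<in>E. \<exists>u v. u \<noteq> v \<and> u \<in> V \<and> v \<in> V \<and> e = {u, v})"

definition conn_rel :: "'a set \<Rightarrow> 'a set set \<Rightarrow> ('a \<times> 'a) set" where
  "conn_rel V A = {(u, v). u \<in> V \<and> v \<in> V \<and> (u, v) \<in> ({(x, y). {x, y} \<in> A})\<^sup>*}"

definition num_comp :: "'a set \<Rightarrow> 'a set set \<Rightarrow> nat" where
  "num_comp V A = card (V // conn_rel V A)"

definition grank :: "'a set \<Rightarrow> 'a set set \<Rightarrow> nat" where
  "grank V A = card V - num_comp V A"

definition density :: "'a set \<Rightarrow> 'a set set \<Rightarrow> real" where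
  "density V A = real (card A) / real (grank V A)"

definition uniformly_dense :: "'a set \<Rightarrow> 'a set set \<Rightarrow> bool" where
  "uniformly_dense V E \<longleftrightarrow>
     (\<forall>A. A \<subseteq> E \<longrightarrow> A \<noteq> {} \<longrightarrow> density V A \<le> density V E)"

definition connected_graph :: "'a set \<Rightarrow> 'a set set \<Rightarrow> bool" where
  "connected_graph V E \<longleftrightarrow> num_comp V E = 1"

definition cycle_rank :: "'a set \<Rightarrow> 'a set set \<Rightarrow> int" where
  "cycle_rank V E = int (card E) - int (grank V E)"

text \<open>A vertex list xs describing a path of length L from s to t, where the inner vertices
  are pairwise distinct and different from both ends (the ends s, t may coincide; a path of
  length 0 is the single vertex s = t).\<close>
definition path_piece :: "'a list \<Rightarrow> 'a \<Rightarrow> 'a \<Rightarrow> nat \<Rightarrow> bool" where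
  "path_piece xs s t L \<longleftrightarrow> length xs = L + 1 \<and> hd xs = s \<and> last xs = t \<and>
     distinct (butlast (tl xs)) \<and> s \<notin> set (butlast (tl xs)) \<and> t \<notin> set (butlast (tl xs))"

definition inner_verts :: "'a list \<Rightarrow> 'a set" where
  "inner_verts xs = set (butlast (tl xs))"

definition path_edges :: "'a list \<Rightarrow> 'a set set" where
  "path_edges xs = {{xs ! i, xs ! Suc i} | i. Suc i < length xs}"

text \<open>G = (V,E) is (isomorphic to) the graph obtained from three paths of lengths L1, L2, L3
  by identifying their start vertices into s and their end vertices into t: the three paths
  are internally vertex-disjoint, their inner vertices avoid s and t, together they cover V,
  and E is the union of their edge sets, with all L1+L2+L3 edges distinct.\<close>
definition three_path_graph :: "'a set \<Rightarrow> 'a set set \<Rightarrow> nat \<Rightarrow> nat \<Rightarrow> nat \<Rightarrow> bool" where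
  "three_path_graph V E L1 L2 L3 \<longleftrightarrow>
     (\<exists>s t p1 p2 p3.
        path_piece p1 s t L1 \<and> path_piece p2 s t L2 \<and> path_piece p3 s t L3 \<and>
        inner_verts p1 \<inter> inner_verts p2 = {} \<and> inner_verts p1 \<inter> inner_verts p3 = {} \<and>
        inner_verts p2 \<inter> inner_verts p3 = {} \<and>
        V = set p1 \<union> set p2 \<union> set p3 \<and>
        E = path_edges p1 \<union> path_edges p2 \<union> path_edges p3 \<and>
        card E = L1 + L2 + L3)"

end

theory Submission
  imports Defs
begin

text \<open>
  The cycle rank \<open>\<beta>(A) = |A| - rank(A)\<close> is monotone in \<open>A\<close> and grows by exactly one
  when an edge is added whose endpoints are already connected.

  Let \<open>G\<close> be a theta graph whose path lengths satisfy the triangle inequalities, with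
  \<open>m\<close> edges and \<open>\<beta>(E) = 2\<close>, so \<open>\<rho>(E) = m / (m - 2)\<close>. A proper subset \<open>A\<close> misses an edge
  \<open>e\<close>, and \<open>\<beta>(A) \<le> \<beta>(E - e) = 1\<close>. If \<open>A\<close> also misses an edge of a second path, then
  \<open>\<beta>(A) = 0\<close> and \<open>\<rho>(A) \<le> 1\<close>; otherwise \<open>A\<close> contains two whole paths, hence at least
  \<open>m / 2\<close> edges, and \<open>\<rho>(A) \<le> |A| / (|A| - 1) \<le> m / (m - 2)\<close>.

  Conversely, a uniformly dense graph with \<open>\<beta>(E) = 2\<close> has no bridge, because deleting a
  bridge leaves density \<open>(m - 1) / (m - 3) > m / (m - 2)\<close>; hence every proper subgraph has
  cycle rank at most one. A cycle through some edge together with an ear attached to it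
  already has cycle rank two, so it is the whole graph, which is thus a theta graph. Finally,
  if one path had more edges than the other two together, the cycle formed by those two
  would have density \<open>k / (k - 1) > m / (m - 2)\<close>.
\<close>

section \<open>Walks and their edge sets\<close>

lemma path_edges_Nil [simp]: "path_edges [] = {}"
  and path_edges_singleton [simp]: "path_edges [x] = {}"
  unfolding path_edges_def by auto

lemma path_edges_Cons_Cons [simp]:
  "path_edges (x # y # zs) = insert {x, y} (path_edges (y # zs))"
  unfolding path_edges_def
proof (intro set_eqI iffI)
  fix e
  assume "e \<in> {{(x # y # zs) ! i, (x # y # zs) ! Suc i} | i. Suc i < length (x # y # zs)}"
  then obtain i where "e = {(x # y # zs) ! i, (x # y # zs) ! Suc i}" "Suc i < length (x # y # zs)"
    by blast
  then show "e \<in> insert {x, y} {{(y # zs) ! i, (y # zs) ! Suc i} | i. Suc i < length (y # zs)}"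
    by (cases i) auto
next
  fix e
  assume "e \<in> insert {x, y} {{(y # zs) ! i, (y # zs) ! Suc i} | i. Suc i < length (y # zs)}"
  then show "e \<in> {{(x # y # zs) ! i, (x # y # zs) ! Suc i} | i. Suc i < length (x # y # zs)}"
  proof
    assume "e = {x, y}"
    then show ?thesis by force
  next
    assume "e \<in> {{(y # zs) ! i, (y # zs) ! Suc i} | i. Suc i < length (y # zs)}"
    then obtain i where "e = {(y # zs) ! i, (y # zs) ! Suc i}" "Suc i < length (y # zs)"
      by blast
    then show ?thesis by (auto intro!: exI[of _ "Suc i"])
  qed
qed

lemma path_edges_Cons: "ys \<noteq> [] \<Longrightarrow> path_edges (x # ys) = insert {x, hd ys} (path_edges ys)"
  by (cases ys) auto

lemma path_edges_append:
  "xs \<noteq> [] \<Longrightarrow> ys \<noteq> [] \<Longrightarrow>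
    path_edges (xs @ ys) = insert {last xs, hd ys} (path_edges xs \<union> path_edges ys)"
  by (induction xs rule: induct_list012) (auto simp: path_edges_Cons)

lemma path_edges_append_Cons:
  "path_edges (xs @ y # zs) = path_edges (xs @ [y]) \<union> path_edges (y # zs)"
  by (cases "xs = []") (auto simp: path_edges_append)

lemma path_edges_prefix_subset: "path_edges xs \<subseteq> path_edges (xs @ ys)"
  and path_edges_suffix_subset: "path_edges ys \<subseteq> path_edges (xs @ ys)"
  by (cases "xs = []"; cases "ys = []"; auto simp: path_edges_append)+

lemma path_edges_rev [simp]: "path_edges (rev xs) = path_edges xs"
proof (induction xs)
  case (Cons x xs)
  then show ?case
    by (cases "xs = []") (simp_all add: path_edges_append path_edges_Cons last_rev insert_commute)
qed simp

lemma path_edge_subset_set: "e \<in> path_edges xs \<Longrightarrow> e \<subseteq> set xs"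
  by (induction xs rule: induct_list012) auto

lemma Union_path_edges: "length xs \<ge> 2 \<Longrightarrow> \<Union>(path_edges xs) = set xs"
proof (induction xs rule: induct_list012)
  case (3 x y zs)
  then show ?case by (cases zs) auto
qed auto

lemma finite_path_edges [simp]: "finite (path_edges xs)"
  by (induction xs rule: induct_list012) auto

lemma card_path_edges_le: "card (path_edges xs) \<le> length xs - 1"
  by (induction xs rule: induct_list012) (auto simp: card_insert_if)

lemma card_path_edges_distinct: "distinct xs \<Longrightarrow> card (path_edges xs) = length xs - 1"
proof (induction xs rule: induct_list012)
  case (3 x y zs)
  then have "{x, y} \<notin> path_edges (y # zs)"
    using path_edge_subset_set by fastforce
  with 3 show ?case by simp
qed auto

lemma path_edge_split:
  "e \<in> path_edges xs \<Longrightarrow>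
    \<exists>ys zs. xs = ys @ zs \<and> ys \<noteq> [] \<and> zs \<noteq> [] \<and> e = {last ys, hd zs}"
proof (induction xs rule: induct_list012)
  case (3 x y zs)
  show ?case
  proof (cases "e = {x, y}")
    case True
    then show ?thesis by (intro exI[of _ "[x]"] exI[of _ "y # zs"]) auto
  next
    case False
    then obtain ys zs' where "y # zs = ys @ zs'" "ys \<noteq> []" "zs' \<noteq> []" "e = {last ys, hd zs'}"
      using 3 by auto
    then show ?thesis by (intro exI[of _ "x # ys"] exI[of _ zs']) auto
  qed
qed auto

lemma split_edge_notin_path_edges:
  assumes "card (path_edges (ys @ zs)) = length (ys @ zs) - 1" "ys \<noteq> []" "zs \<noteq> []"
  shows "{last ys, hd zs} \<notin> path_edges ys \<union> path_edges zs"
proof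
  assume "{last ys, hd zs} \<in> path_edges ys \<union> path_edges zs"
  then have "path_edges (ys @ zs) = path_edges ys \<union> path_edges zs"
    using path_edges_append[OF assms(2,3)] by auto
  then have "card (path_edges (ys @ zs)) \<le> card (path_edges ys) + card (path_edges zs)"
    by (simp add: card_Un_le)
  also have "\<dots> \<le> (length ys - 1) + (length zs - 1)"
    by (intro add_mono card_path_edges_le)
  finally show False using assms by (cases ys; cases zs) auto
qed

lemma path_edge_snoc_meets: "e \<in> path_edges (ys @ [z]) \<Longrightarrow> \<exists>w\<in>set ys. w \<in> e"
  by (induction ys rule: induct_list012) (auto simp: path_edges_Cons)

definition cycle_edges :: "'a list \<Rightarrow> 'a set set" where
  "cycle_edges xs = insert {hd xs, last xs} (path_edges xs)"

lemma cycle_edges_rotate: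
  assumes "ys \<noteq> []" "zs \<noteq> []"
  shows "cycle_edges (zs @ ys) = cycle_edges (ys @ zs)"
  using assms unfolding cycle_edges_def
  by (auto simp: path_edges_append insert_commute)

lemma cycle_edges_split:
  assumes "xs = ys @ z # zs"
  shows "cycle_edges xs = path_edges (ys @ [z]) \<union> path_edges (hd xs # rev zs @ [z])"
proof -
  have "path_edges (hd xs # rev zs @ [z]) = insert {hd xs, last xs} (path_edges (z # zs))"
    using path_edges_Cons[of "rev zs @ [z]" "hd xs"] path_edges_rev[of "z # zs"]
    by (simp add: assms hd_append hd_rev)
  then show ?thesis
    unfolding cycle_edges_def using path_edges_append_Cons[of ys z zs] assms by auto
qed

lemma Union_cycle_edges:
  assumes "length xs \<ge> 2"
  shows "\<Union>(cycle_edges xs) = set xs"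
proof -
  have "xs \<noteq> []" using assms by auto
  then show ?thesis
    unfolding cycle_edges_def using Union_path_edges[OF assms] by auto
qed

lemma closing_edge_notin_path_edges:
  assumes "distinct P" "length P \<ge> 3"
  shows "{hd P, last P} \<notin> path_edges P"
proof
  assume "{hd P, last P} \<in> path_edges P"
  then obtain i where i: "Suc i < length P" "{hd P, last P} = {P ! i, P ! Suc i}"
    unfolding path_edges_def by blast
  have "P \<noteq> []" using assms(2) by auto
  moreover have "hd P \<in> {P ! i, P ! Suc i}" "last P \<in> {P ! i, P ! Suc i}"
    using i(2) by (metis insertI1 insert_commute)+
  ultimately have first: "P ! 0 \<in> {P ! i, P ! Suc i}"
    and final: "P ! (length P - 1) \<in> {P ! i, P ! Suc i}"
    by (simp_all add: hd_conv_nth last_conv_nth)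
  have inj: "P ! j = P ! k \<longleftrightarrow> j = k" if "j < length P" "k < length P" for j k
    using nth_eq_iff_index_eq[OF assms(1) that] .
  have lt: "0 < length P" "i < length P" "length P - 1 < length P"
    using i(1) by auto
  have "0 = i \<or> 0 = Suc i"
    using first inj[OF lt(1) lt(2)] inj[OF lt(1) i(1)] by blast
  moreover have "length P - 1 = i \<or> length P - 1 = Suc i"
    using final inj[OF lt(3) lt(2)] inj[OF lt(3) i(1)] by blast
  ultimately show False using assms(2) by auto
qed

lemma card_cycle_edges: "distinct xs \<Longrightarrow> length xs \<ge> 3 \<Longrightarrow> card (cycle_edges xs) = length xs"
  using closing_edge_notin_path_edges card_path_edges_distinct
  unfolding cycle_edges_def by fastforce

section \<open>Connectivity\<close>

definition adj :: "'a set set \<Rightarrow> ('a \<times> 'a) set" where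
  "adj A = {(x, y). {x, y} \<in> A}"

lemma conn_rel_adj: "conn_rel V A = {(u, v). u \<in> V \<and> v \<in> V \<and> (u, v) \<in> (adj A)\<^sup>*}"
  unfolding conn_rel_def adj_def by simp

lemma sym_adj: "sym (adj A)"
  unfolding adj_def sym_def by (auto simp: insert_commute)

lemma adj_insert: "adj (insert {u, v} A) = adj A \<union> {(u, v), (v, u)}"
  unfolding adj_def by (auto simp: doubleton_eq_iff)

lemma rtrancl_adj_sym: "(u, v) \<in> (adj A)\<^sup>* \<longleftrightarrow> (v, u) \<in> (adj A)\<^sup>*"
  using sym_rtrancl[OF sym_adj, of A] unfolding sym_def by blast

lemma equiv_conn_rel: "equiv V (conn_rel V A)"
proof (rule equivI)
  show "conn_rel V A \<subseteq> V \<times> V"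
    unfolding conn_rel_adj by auto
  show "refl_on V (conn_rel V A)"
    unfolding conn_rel_adj refl_on_def by auto
  show "sym (conn_rel V A)"
    unfolding conn_rel_adj by (rule symI) (simp add: rtrancl_adj_sym[of _ _ A])
  show "trans (conn_rel V A)"
    unfolding conn_rel_adj trans_def by auto
qed

lemma conn_rel_sym: "(u, v) \<in> conn_rel V A \<Longrightarrow> (v, u) \<in> conn_rel V A"
  using equiv_conn_rel[of V A] unfolding equiv_def sym_def by blast

lemma conn_rel_trans:
  "(u, v) \<in> conn_rel V A \<Longrightarrow> (v, w) \<in> conn_rel V A \<Longrightarrow> (u, w) \<in> conn_rel V A"
  using equiv_conn_rel[of V A] unfolding equiv_def trans_def by blast

lemma conn_rel_refl: "u \<in> V \<Longrightarrow> (u, u) \<in> conn_rel V A"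
  unfolding conn_rel_adj by auto

lemma conn_rel_mono: "A \<subseteq> B \<Longrightarrow> (u, v) \<in> conn_rel V A \<Longrightarrow> (u, v) \<in> conn_rel V B"
  unfolding conn_rel_adj using rtrancl_mono[of "adj A" "adj B"] unfolding adj_def by auto

lemma conn_rel_edge: "u \<in> V \<Longrightarrow> v \<in> V \<Longrightarrow> {u, v} \<in> A \<Longrightarrow> (u, v) \<in> conn_rel V A"
  unfolding conn_rel_adj adj_def by auto

lemma conn_rel_walk:
  "xs \<noteq> [] \<Longrightarrow> set xs \<subseteq> V \<Longrightarrow> path_edges xs \<subseteq> A \<Longrightarrow> (hd xs, last xs) \<in> conn_rel V A"
proof (induction xs rule: induct_list012)
  case (3 x y zs)
  then have "(x, y) \<in> conn_rel V A" "(y, last (y # zs)) \<in> conn_rel V A"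
    by (auto intro: conn_rel_edge)
  then show ?case by (auto intro: conn_rel_trans)
qed (auto intro: conn_rel_refl)

lemma conn_rel_walk_vertices:
  assumes "u \<in> set xs" "w \<in> set xs" "set xs \<subseteq> V" "path_edges xs \<subseteq> A"
  shows "(u, w) \<in> conn_rel V A"
proof -
  have from_hd: "(hd xs, q) \<in> conn_rel V A" if "q \<in> set xs" for q
  proof -
    obtain ys zs where xs: "xs = ys @ q # zs"
      using \<open>q \<in> set xs\<close> split_list by metis
    then have "path_edges (ys @ [q]) \<subseteq> A"
      using assms(4) path_edges_append_Cons[of ys q zs] by auto
    from conn_rel_walk[OF _ _ this] assms(3) xs show ?thesis by (cases ys) auto
  qed
  show ?thesis
    using from_hd[OF assms(1)] from_hd[OF assms(2)] conn_rel_sym conn_rel_trans by metis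
qed

lemma conn_rel_distinct_path:
  assumes "(u, v) \<in> conn_rel V A"
  shows "\<exists>xs. xs \<noteq> [] \<and> hd xs = u \<and> last xs = v \<and> distinct xs \<and> path_edges xs \<subseteq> A"
proof -
  have "(u, v) \<in> (adj A)\<^sup>*" using assms unfolding conn_rel_adj by simp
  then show ?thesis
  proof (induction rule: converse_rtrancl_induct)
    case base
    then show ?case by (intro exI[of _ "[v]"]) auto
  next
    case (step u w)
    then obtain xs where xs: "xs \<noteq> []" "hd xs = w" "last xs = v" "distinct xs" "path_edges xs \<subseteq> A"
      by blast
    show ?case
    proof (cases "u \<in> set xs")
      case True
      then obtain ys zs where "xs = ys @ u # zs" using split_list by metis
      then show ?thesis using xs path_edges_append_Cons[of ys u zs]
        by (intro exI[of _ "u # zs"]) (auto split: if_splits)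
    next
      case False
      have "{u, w} \<in> A" using step(1) unfolding adj_def by auto
      then show ?thesis using xs False
        by (intro exI[of _ "u # xs"]) (auto simp: path_edges_Cons)
    qed
  qed
qed

lemma conn_rel_in_Union:
  assumes "(u, v) \<in> conn_rel V A"
  shows "v = u \<or> v \<in> \<Union>A"
proof -
  have "(u, v) \<in> (adj A)\<^sup>*" using assms unfolding conn_rel_adj by simp
  then show ?thesis by (induction rule: rtrancl_induct) (auto simp: adj_def)
qed

lemma conn_rel_leaves_set:
  assumes "(u, v) \<in> conn_rel V A" "u \<in> W" "v \<notin> W"
  shows "\<exists>x y. {x, y} \<in> A \<and> x \<in> W \<and> y \<notin> W"
proof -
  have "(u, v) \<in> (adj A)\<^sup>*" using assms(1) unfolding conn_rel_adj by simp
  then show ?thesis using assms(2,3)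
    by (induction rule: rtrancl_induct) (auto simp: adj_def)
qed

text \<open>The hypothesis on \<open>card (path_edges p)\<close> says that \<open>p\<close> traverses no edge twice; so
  deleting one traversed edge leaves its endpoints joined by the rest of \<open>p\<close> and \<open>B\<close>.\<close>

lemma conn_rel_remove_walk_edge:
  assumes "e \<in> path_edges p" "card (path_edges p) = length p - 1" "set p \<subseteq> V"
    and "(hd p, last p) \<in> conn_rel V B"
  shows "\<exists>u v. e = {u, v} \<and> (u, v) \<in> conn_rel V (path_edges p - {e} \<union> B)"
proof -
  let ?H = "path_edges p - {e} \<union> B"
  obtain ys zs where p: "p = ys @ zs" "ys \<noteq> []" "zs \<noteq> []" and e: "e = {last ys, hd zs}"
    using path_edge_split[OF assms(1)] by blast
  have "e \<notin> path_edges ys \<union> path_edges zs"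
    using split_edge_notin_path_edges[of ys zs] assms(2) p e by simp
  then have "path_edges ys \<subseteq> ?H" "path_edges zs \<subseteq> ?H"
    using path_edges_prefix_subset[of ys zs] path_edges_suffix_subset[of zs ys] p by auto
  then have "(hd ys, last ys) \<in> conn_rel V ?H" "(hd zs, last zs) \<in> conn_rel V ?H"
    using conn_rel_walk[of ys V ?H] conn_rel_walk[of zs V ?H] assms(3) p by auto
  moreover have "(hd ys, last zs) \<in> conn_rel V ?H"
    using conn_rel_mono[OF _ assms(4), of ?H] p by auto
  ultimately have "(last ys, hd zs) \<in> conn_rel V ?H"
    using conn_rel_sym conn_rel_trans by metis
  with e show ?thesis by blast
qed

lemma connected_graph_conn_rel:
  assumes "connected_graph V E" "u \<in> V" "v \<in> V"
  shows "(u, v) \<in> conn_rel V E"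
proof -
  obtain X where X: "V // conn_rel V E = {X}"
    using assms(1) unfolding connected_graph_def num_comp_def by (rule card_1_singletonE)
  have "conn_rel V E `` {u} \<in> V // conn_rel V E" "conn_rel V E `` {v} \<in> V // conn_rel V E"
    using assms(2,3) by (auto intro: quotientI)
  then have "conn_rel V E `` {u} = conn_rel V E `` {v}"
    unfolding X by simp
  then show ?thesis
    using eq_equiv_class_iff[OF equiv_conn_rel assms(2,3)] by blast
qed

section \<open>Rank and cycle rank\<close>

lemma quotient_conn_rel: "V // conn_rel V A = (\<lambda>x. conn_rel V A `` {x}) ` V"
  unfolding quotient_def by auto

lemma num_comp_le_card: "finite V \<Longrightarrow> num_comp V A \<le> card V"
  unfolding num_comp_def quotient_conn_rel by (rule card_image_le)

lemma grank_empty: "finite V \<Longrightarrow> grank V {} = 0"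
proof -
  assume "finite V"
  have "conn_rel V {} `` {x} = {x}" if "x \<in> V" for x
    using that unfolding conn_rel_adj adj_def by auto
  then have "V // conn_rel V {} = (\<lambda>x. {x}) ` V"
    unfolding quotient_conn_rel by simp
  with \<open>finite V\<close> show ?thesis
    unfolding grank_def num_comp_def by (simp add: card_image)
qed

lemma conn_rel_insert_connected:
  assumes "(u, v) \<in> conn_rel V A"
  shows "conn_rel V (insert {u, v} A) = conn_rel V A"
proof -
  have "(u, v) \<in> (adj A)\<^sup>*" "(v, u) \<in> (adj A)\<^sup>*"
    using assms conn_rel_sym[OF assms] unfolding conn_rel_adj by auto
  then have "(adj (insert {u, v} A))\<^sup>* = (adj A)\<^sup>*"
    unfolding adj_insert by (intro rtrancl_subset) auto
  then show ?thesis unfolding conn_rel_adj by simp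
qed

lemma grank_insert_connected:
  "(u, v) \<in> conn_rel V A \<Longrightarrow> grank V (insert {u, v} A) = grank V A"
  unfolding grank_def num_comp_def by (simp add: conn_rel_insert_connected)

lemma rtrancl_insert_sym_pair_iff:
  "(x, y) \<in> (R \<union> {(u, v), (v, u)})\<^sup>* \<longleftrightarrow>
    (x, y) \<in> R\<^sup>* \<or> ((x, u) \<in> R\<^sup>* \<and> (v, y) \<in> R\<^sup>*) \<or> ((x, v) \<in> R\<^sup>* \<and> (u, y) \<in> R\<^sup>*)"
    (is "?lhs \<longleftrightarrow> ?rhs")
proof
  assume ?lhs
  then show ?rhs
  proof (induction rule: rtrancl_induct)
    case (step y z)
    then show ?case by (auto intro: rtrancl_into_rtrancl)
  qed simp
next
  have "R\<^sup>* \<subseteq> (R \<union> {(u, v), (v, u)})\<^sup>*" by (rule rtrancl_mono) auto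
  moreover have "(u, v) \<in> (R \<union> {(u, v), (v, u)})\<^sup>*" "(v, u) \<in> (R \<union> {(u, v), (v, u)})\<^sup>*"
    by auto
  moreover assume ?rhs
  ultimately show ?lhs by (meson rtrancl_trans subsetD)
qed

lemma conn_rel_insert_iff:
  assumes "u \<in> V" "v \<in> V"
  shows "(x, y) \<in> conn_rel V (insert {u, v} A) \<longleftrightarrow>
    (x, y) \<in> conn_rel V A \<or> ((u, x) \<in> conn_rel V A \<and> (v, y) \<in> conn_rel V A) \<or>
      ((v, x) \<in> conn_rel V A \<and> (u, y) \<in> conn_rel V A)"
  unfolding conn_rel_adj adj_insert rtrancl_insert_sym_pair_iff
  using assms rtrancl_adj_sym[of _ _ A] by auto

lemma conn_rel_insert_class:
  fixes A :: "'a set set"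
  assumes "u \<in> V" "v \<in> V"
  defines "Cu \<equiv> conn_rel V A `` {u}" and "Cv \<equiv> conn_rel V A `` {v}"
  shows "conn_rel V (insert {u, v} A) `` {w} =
    (if w \<in> Cu \<union> Cv then Cu \<union> Cv else conn_rel V A `` {w})"
proof -
  let ?r = "conn_rel V A"
  have "conn_rel V (insert {u, v} A) `` {w} =
      ?r `` {w} \<union> (if w \<in> Cu then Cv else {}) \<union> (if w \<in> Cv then Cu else {})"
    unfolding Cu_def Cv_def by (auto simp: conn_rel_insert_iff[OF assms(1,2)])
  moreover have "w \<in> Cu \<Longrightarrow> ?r `` {w} = Cu" "w \<in> Cv \<Longrightarrow> ?r `` {w} = Cv"
    unfolding Cu_def Cv_def by (auto dest: equiv_class_eq[OF equiv_conn_rel])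
  ultimately show ?thesis by auto
qed

lemma num_comp_insert_disconnected:
  assumes "finite V" "u \<in> V" "v \<in> V" "(u, v) \<notin> conn_rel V A"
  shows "num_comp V (insert {u, v} A) + 1 = num_comp V A"
proof -
  let ?r = "conn_rel V A"
  define Cu where "Cu = ?r `` {u}"
  define Cv where "Cv = ?r `` {v}"
  have eq: "equiv V ?r" by (rule equiv_conn_rel)
  have uv_classes: "Cu \<in> V // ?r" "Cv \<in> V // ?r" "Cu \<noteq> Cv"
    unfolding Cu_def Cv_def using assms(2-4) eq_equiv_class_iff[OF eq]
    by (auto intro: quotientI)
  have in_Cu_Cv: "w \<in> Cu \<union> Cv \<longleftrightarrow> ?r `` {w} = Cu \<or> ?r `` {w} = Cv" if "w \<in> V" for w
    unfolding Cu_def Cv_def using eq_equiv_class_iff[OF eq] that assms(2,3) conn_rel_sym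
    by blast
  have "V // conn_rel V (insert {u, v} A) = insert (Cu \<union> Cv) (V // ?r - {Cu, Cv})"
  proof -
    have "V // conn_rel V (insert {u, v} A) =
        (\<lambda>w. if w \<in> Cu \<union> Cv then Cu \<union> Cv else ?r `` {w}) ` V"
      unfolding quotient_conn_rel Cu_def Cv_def conn_rel_insert_class[OF assms(2,3)] ..
    also have "\<dots> = insert (Cu \<union> Cv) ((\<lambda>w. ?r `` {w}) ` (V - (Cu \<union> Cv)))"
      using assms(2) conn_rel_refl[of u V A] unfolding Cu_def by (auto simp: image_iff)
    also have "(\<lambda>w. ?r `` {w}) ` (V - (Cu \<union> Cv)) = V // ?r - {Cu, Cv}"
      unfolding quotient_conn_rel using in_Cu_Cv by auto
    finally show ?thesis .
  qed
  moreover have "Cu \<union> Cv \<notin> V // ?r"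
  proof
    assume "Cu \<union> Cv \<in> V // ?r"
    moreover have "Cu \<noteq> {}" "Cv \<noteq> {}"
      unfolding Cu_def Cv_def using assms(2,3) by (auto intro: conn_rel_refl)
    ultimately show False
      using uv_classes quotient_disj[OF eq] by (metis Int_absorb2 Un_upper1 Un_upper2)
  qed
  moreover have fin: "finite (V // ?r)"
    using assms(1) unfolding quotient_conn_rel by simp
  moreover have "card {Cu, Cv} \<le> card (V // ?r)"
    using uv_classes by (intro card_mono fin) auto
  ultimately show ?thesis
    unfolding num_comp_def using uv_classes by (simp add: card_Diff_subset)
qed

lemma grank_insert_disconnected:
  assumes "finite V" "u \<in> V" "v \<in> V" "(u, v) \<notin> conn_rel V A"
  shows "grank V (insert {u, v} A) = grank V A + 1"
  using num_comp_insert_disconnected[OF assms] num_comp_le_card[OF assms(1), of A]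
  unfolding grank_def by linarith

lemma grank_insert_le:
  assumes "finite V" "u \<in> V" "v \<in> V"
  shows "grank V A \<le> grank V (insert {u, v} A) \<and> grank V (insert {u, v} A) \<le> grank V A + 1"
  using grank_insert_disconnected[OF assms] grank_insert_connected[of u v V A]
  by (cases "(u, v) \<in> conn_rel V A") auto

lemma simple_graph_subset: "simple_graph V E \<Longrightarrow> A \<subseteq> E \<Longrightarrow> simple_graph V A"
  unfolding simple_graph_def by blast

lemma simple_graph_edgeE:
  assumes "simple_graph V E" "e \<in> E"
  obtains u v where "u \<noteq> v" "u \<in> V" "v \<in> V" "e = {u, v}"
  using assms unfolding simple_graph_def by blast

lemma simple_graph_Union_subset: "simple_graph V E \<Longrightarrow> \<Union>E \<subseteq> V"
  by (blast elim: simple_graph_edgeE)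

lemma simple_graph_finite_edges: "simple_graph V E \<Longrightarrow> finite E"
  using finite_subset[of E "Pow V"] simple_graph_Union_subset[of V E]
  unfolding simple_graph_def by blast

lemma grank_le_card:
  assumes "simple_graph V A"
  shows "grank V A \<le> card A"
  using simple_graph_finite_edges[OF assms] assms
proof (induction A rule: finite_induct)
  case empty
  then show ?case using grank_empty unfolding simple_graph_def by simp
next
  case (insert e A)
  then obtain u v where "u \<in> V" "v \<in> V" "e = {u, v}"
    by (blast elim: simple_graph_edgeE)
  with insert show ?case
    using grank_insert_le[of V u v A] simple_graph_subset[of V "insert e A" A]
    unfolding simple_graph_def by fastforce
qed

lemma cycle_rank_nonneg: "simple_graph V A \<Longrightarrow> cycle_rank V A \<ge> 0"
  unfolding cycle_rank_def using grank_le_card by simp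

lemma grank_cycle_rank_mono:
  assumes "simple_graph V B" "A \<subseteq> B"
  shows "grank V A \<le> grank V B \<and> cycle_rank V A \<le> cycle_rank V B"
proof -
  have "grank V A \<le> grank V (A \<union> F) \<and> cycle_rank V A \<le> cycle_rank V (A \<union> F)"
    if "finite F" "F \<subseteq> B" for F
    using that
  proof (induction F rule: finite_induct)
    case (insert e F)
    have "A \<union> F \<subseteq> B" using assms(2) insert.prems by blast
    then have fin: "finite (A \<union> F)"
      using simple_graph_finite_edges[OF assms(1)] by (rule finite_subset)
    obtain u v where uv: "u \<in> V" "v \<in> V" "e = {u, v}"
      using assms(1) insert.prems by (blast elim: simple_graph_edgeE)
    have "A \<union> insert e F = insert e (A \<union> F)" by auto
    moreover have "grank V (A \<union> F) \<le> grank V (insert e (A \<union> F)) \<and>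
        grank V (insert e (A \<union> F)) \<le> grank V (A \<union> F) + 1"
      using grank_insert_le[of V u v] assms(1) uv unfolding simple_graph_def by simp
    ultimately show ?case
      using insert fin unfolding cycle_rank_def
      by (cases "e \<in> A \<union> F") (auto simp: insert_absorb)
  qed simp
  moreover have "finite (B - A)"
    using simple_graph_finite_edges[OF assms(1)] by simp
  moreover have "A \<union> (B - A) = B" using assms(2) by auto
  ultimately show ?thesis by (metis Diff_subset)
qed

lemma grank_mono: "simple_graph V B \<Longrightarrow> A \<subseteq> B \<Longrightarrow> grank V A \<le> grank V B"
  and cycle_rank_mono: "simple_graph V B \<Longrightarrow> A \<subseteq> B \<Longrightarrow> cycle_rank V A \<le> cycle_rank V B"
  using grank_cycle_rank_mono by blast+

lemma grank_pos:
  assumes "simple_graph V A" "A \<noteq> {}"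
  shows "grank V A \<ge> 1"
proof -
  obtain e u v where "e \<in> A" "u \<noteq> v" "u \<in> V" "v \<in> V" "e = {u, v}"
    using assms by (blast elim: simple_graph_edgeE)
  moreover have "(u, v) \<notin> conn_rel V {}"
    using \<open>u \<noteq> v\<close> unfolding conn_rel_adj adj_def by auto
  ultimately have "grank V {e} = 1"
    using grank_insert_disconnected[of V u v "{}"] grank_empty[of V] assms(1)
    unfolding simple_graph_def by simp
  then show ?thesis
    using grank_mono[OF assms(1), of "{e}"] \<open>e \<in> A\<close> by simp
qed

lemma cycle_rank_insert_connected:
  assumes "finite A" "e \<notin> A" "e = {u, v}" "(u, v) \<in> conn_rel V A"
  shows "cycle_rank V (insert e A) = cycle_rank V A + 1"
  using assms grank_insert_connected[OF assms(4)] unfolding cycle_rank_def by simp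

lemma cycle_rank_remove_nonbridge:
  assumes "finite B" "e \<in> B" "e = {u, v}" "(u, v) \<in> conn_rel V (B - {e})"
  shows "cycle_rank V (B - {e}) = cycle_rank V B - 1"
  using cycle_rank_insert_connected[of "B - {e}" e u v V] assms by (simp add: insert_absorb)

lemma cycle_rank_add_walk:
  assumes "simple_graph V (B \<union> path_edges p)" "card (path_edges p) = length p - 1"
    and "(hd p, last p) \<in> conn_rel V B" "\<not> path_edges p \<subseteq> B"
  shows "cycle_rank V B + 1 \<le> cycle_rank V (B \<union> path_edges p)"
proof -
  let ?H = "B \<union> path_edges p"
  obtain e where e: "e \<in> path_edges p" "e \<notin> B" using assms(4) by blast
  then have "length p \<ge> 2" by (cases p; cases "tl p") auto
  then have "set p = \<Union>(path_edges p)" by (simp add: Union_path_edges)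
  also have "\<dots> \<subseteq> V" using simple_graph_Union_subset[OF assms(1)] by blast
  finally have "set p \<subseteq> V" .
  then obtain u v where "e = {u, v}" "(u, v) \<in> conn_rel V (path_edges p - {e} \<union> B)"
    using conn_rel_remove_walk_edge[OF e(1) assms(2) _ assms(3)] by blast
  moreover have "path_edges p - {e} \<union> B = ?H - {e}" using e(2) by blast
  ultimately have uv: "e = {u, v}" "(u, v) \<in> conn_rel V (?H - {e})" by simp_all
  have "cycle_rank V (?H - {e}) = cycle_rank V ?H - 1"
    using cycle_rank_remove_nonbridge[OF simple_graph_finite_edges[OF assms(1)] _ uv] e by simp
  moreover have "cycle_rank V B \<le> cycle_rank V (?H - {e})"
    using e(2) by (intro cycle_rank_mono[OF simple_graph_subset[OF assms(1) Diff_subset]]) blast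
  ultimately show ?thesis by linarith
qed

lemma one_le_cycle_rank_cycle_edges:
  assumes sg: "simple_graph V (cycle_edges P)" and "distinct P" "length P \<ge> 3"
  shows "cycle_rank V (cycle_edges P) \<ge> 1"
proof -
  have "P \<noteq> []" using assms(3) by auto
  have sgP: "simple_graph V (path_edges P)"
    using simple_graph_subset[OF sg] unfolding cycle_edges_def by blast
  have "set P \<subseteq> V"
    using Union_cycle_edges[of P] simple_graph_Union_subset[OF sg] assms(3) by simp
  then have "(hd P, last P) \<in> conn_rel V (path_edges P)"
    using conn_rel_walk[OF \<open>P \<noteq> []\<close>] by simp
  moreover have "{hd P, last P} \<notin> path_edges P"
    using closing_edge_notin_path_edges[OF assms(2,3)] .
  ultimately have "cycle_rank V (path_edges P) + 1 \<le> cycle_rank V (cycle_edges P)"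
    using cycle_rank_add_walk[of V "path_edges P" "[hd P, last P]"] sg
    unfolding cycle_edges_def by (simp add: Un_commute)
  then show ?thesis using cycle_rank_nonneg[OF sgP] by simp
qed

lemma connected_graph_Union_edges:
  assumes "simple_graph V E" "connected_graph V E" "E \<noteq> {}"
  shows "\<Union>E = V"
proof
  show "\<Union>E \<subseteq> V" using simple_graph_Union_subset[OF assms(1)] .
  obtain e where "e \<in> E" using assms(3) by blast
  then obtain a b where "a \<noteq> b" "a \<in> V" "b \<in> V" "e = {a, b}"
    by (rule simple_graph_edgeE[OF assms(1)])
  with \<open>e \<in> E\<close> have a: "a \<in> \<Union>E" by blast
  show "V \<subseteq> \<Union>E"
  proof
    fix v assume "v \<in> V"
    then have "v = a \<or> v \<in> \<Union>E"
      using conn_rel_in_Union[OF connected_graph_conn_rel[OF assms(2) \<open>a \<in> V\<close>]] by blast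
    with a show "v \<in> \<Union>E" by blast
  qed
qed

lemma cycle_rank_connected_cycle:
  assumes "connected_graph V (cycle_edges P)" "V = set P" "distinct P" "length P \<ge> 3"
  shows "cycle_rank V (cycle_edges P) = 1"
proof -
  have "card (cycle_edges P) = length P" using card_cycle_edges[OF assms(3,4)] .
  moreover have "grank V (cycle_edges P) = length P - 1"
    using assms(1,2) distinct_card[OF assms(3)]
    unfolding grank_def connected_graph_def by simp
  ultimately show ?thesis
    using assms(4) unfolding cycle_rank_def by simp
qed

section \<open>Theta graphs\<close>

locale theta_graph =
  fixes V :: "'a set" and E :: "'a set set" and s t :: 'a and p1 p2 p3 :: "'a list"
    and L1 L2 L3 :: nat
  assumes path1: "path_piece p1 s t L1" and path2: "path_piece p2 s t L2"
    and path3: "path_piece p3 s t L3"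
    and inner12: "inner_verts p1 \<inter> inner_verts p2 = {}"
    and inner13: "inner_verts p1 \<inter> inner_verts p3 = {}"
    and inner23: "inner_verts p2 \<inter> inner_verts p3 = {}"
    and vertices: "V = set p1 \<union> set p2 \<union> set p3"
    and edges: "E = path_edges p1 \<union> path_edges p2 \<union> path_edges p3"
    and card_edges: "card E = L1 + L2 + L3"

lemma three_path_graph_iff_theta_graph:
  "three_path_graph V E L1 L2 L3 \<longleftrightarrow> (\<exists>s t p1 p2 p3. theta_graph V E s t p1 p2 p3 L1 L2 L3)"
  unfolding three_path_graph_def theta_graph_def by simp

lemma ratio_le_ratio_minus_two:
  fixes a r m :: nat
  assumes "1 \<le> r" "a \<le> r + 1" "m \<le> 2 * a \<or> a \<le> r" "3 \<le> m"
  shows "real a / real r \<le> real m / real (m - 2)"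
proof -
  have "real a * (real m - 2) \<le> real m * real r"
  proof (cases "a \<le> r")
    case True
    then have "real a * (real m - 2) \<le> real r * (real m - 2)"
      using assms(4) by (intro mult_right_mono) auto
    also have "\<dots> \<le> real m * real r" using assms by (simp add: algebra_simps)
    finally show ?thesis .
  next
    case False
    then have "real m \<le> 2 * real a" using assms(3) by linarith
    then have "real a * (real m - 2) \<le> real m * (real a - 1)" by (simp add: algebra_simps)
    also have "\<dots> \<le> real m * real r" using assms(2) by (intro mult_left_mono) auto
    finally show ?thesis .
  qed
  moreover have "real r > 0" "real (m - 2) = real m - 2" "real m - 2 > 0" using assms by auto
  ultimately show ?thesis by (simp add: divide_simps mult.commute)
qed

lemma density_eq_if_cycle_rank_2:
  "cycle_rank V E = 2 \<Longrightarrow> density V E = real (card E) / real (card E - 2)"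
  unfolding density_def cycle_rank_def by (simp add: nat_diff_distrib)

context theta_graph
begin

lemma swap12: "theta_graph V E s t p2 p1 p3 L2 L1 L3"
  and swap23: "theta_graph V E s t p1 p3 p2 L1 L3 L2"
  using theta_graph_axioms unfolding theta_graph_def by (auto simp: ac_simps)

lemma finite_edges: "finite E"
  unfolding edges by simp

text \<open>The paths have at most \<open>L1, L2, L3\<close> edges; equality in \<open>card_edges\<close> forces
  each bound to be attained and the edge sets to be disjoint.\<close>

lemma card_path_edges:
  "card (path_edges p1) = L1" "card (path_edges p2) = L2" "card (path_edges p3) = L3"
  and disjoint_path_edges:
  "path_edges p1 \<inter> path_edges p2 = {}" "path_edges p1 \<inter> path_edges p3 = {}"
  "path_edges p2 \<inter> path_edges p3 = {}"
proof -
  let ?e1 = "path_edges p1" and ?e2 = "path_edges p2" and ?e3 = "path_edges p3"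
  have le: "card ?e1 \<le> L1" "card ?e2 \<le> L2" "card ?e3 \<le> L3"
    using card_path_edges_le[of p1] card_path_edges_le[of p2] card_path_edges_le[of p3]
      path1 path2 path3
    unfolding path_piece_def by simp_all
  have u12: "card (?e1 \<union> ?e2) + card (?e1 \<inter> ?e2) = card ?e1 + card ?e2"
    using card_Un_Int[of ?e1 ?e2] by simp
  have u123: "card (?e1 \<union> ?e2 \<union> ?e3) + card ((?e1 \<union> ?e2) \<inter> ?e3) = card (?e1 \<union> ?e2) + card ?e3"
    using card_Un_Int[of "?e1 \<union> ?e2" ?e3] by simp
  have "card (?e1 \<union> ?e2 \<union> ?e3) = L1 + L2 + L3"
    using card_edges edges by simp
  with le u12 u123 have "card ?e1 = L1 \<and> card ?e2 = L2 \<and> card ?e3 = L3 \<and>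
      card (?e1 \<inter> ?e2) = 0 \<and> card ((?e1 \<union> ?e2) \<inter> ?e3) = 0"
    by linarith
  then show "card ?e1 = L1" "card ?e2 = L2" "card ?e3 = L3"
    "?e1 \<inter> ?e2 = {}" "?e1 \<inter> ?e3 = {}" "?e2 \<inter> ?e3 = {}"
    by auto
qed

lemma card_path_edges1_eq_length: "card (path_edges p1) = length p1 - 1"
  using card_path_edges(1) path1 unfolding path_piece_def by simp

lemma ends_conn_rel_path_edges2: "(hd p1, last p1) \<in> conn_rel V (path_edges p2)"
proof -
  have "(hd p2, last p2) \<in> conn_rel V (path_edges p2)"
    using path2 unfolding path_piece_def vertices by (intro conn_rel_walk) auto
  then show ?thesis using path1 path2 unfolding path_piece_def by simp
qed

lemma path_edges1_nonbridge:
  assumes "e \<in> path_edges p1"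
  shows "\<exists>u v. e = {u, v} \<and> (u, v) \<in> conn_rel V (path_edges p1 - {e} \<union> path_edges p2)"
  using conn_rel_remove_walk_edge[OF assms card_path_edges1_eq_length _ ends_conn_rel_path_edges2]
  unfolding vertices by blast

lemma cycle_rank_remove_edge:
  assumes "e \<in> path_edges p1"
  shows "cycle_rank V (E - {e}) = cycle_rank V E - 1"
proof -
  obtain u v where uv: "e = {u, v}" "(u, v) \<in> conn_rel V (path_edges p1 - {e} \<union> path_edges p2)"
    using path_edges1_nonbridge[OF assms] by blast
  have "path_edges p1 - {e} \<union> path_edges p2 \<subseteq> E - {e}"
    using disjoint_path_edges assms unfolding edges by auto
  from conn_rel_mono[OF this uv(2)] have "(u, v) \<in> conn_rel V (E - {e})" .
  moreover have "e \<in> E" using assms unfolding edges by blast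
  ultimately show ?thesis
    using cycle_rank_remove_nonbridge[OF finite_edges _ uv(1)] by simp
qed

lemma cycle_rank_remove_two_edges:
  assumes "e \<in> path_edges p1" "e' \<in> path_edges p2"
  shows "cycle_rank V (E - {e} - {e'}) = cycle_rank V E - 2"
proof -
  obtain u v where uv: "e' = {u, v}" "(u, v) \<in> conn_rel V (path_edges p2 - {e'} \<union> path_edges p3)"
    using theta_graph.path_edges1_nonbridge[OF swap12[THEN theta_graph.swap23] assms(2)] by blast
  have "path_edges p2 - {e'} \<union> path_edges p3 \<subseteq> E - {e} - {e'}"
    using disjoint_path_edges assms unfolding edges by auto
  from conn_rel_mono[OF this uv(2)] have "(u, v) \<in> conn_rel V (E - {e} - {e'})" .
  moreover have "e' \<in> E - {e}"
    using assms disjoint_path_edges unfolding edges by blast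
  ultimately have "cycle_rank V (E - {e} - {e'}) = cycle_rank V (E - {e}) - 1"
    using cycle_rank_remove_nonbridge[of "E - {e}" e' u v V] finite_edges uv(1) by simp
  then show ?thesis using cycle_rank_remove_edge[OF assms(1)] by simp
qed

lemma one_le_cycle_rank_two_paths:
  assumes "simple_graph V E" "1 \<le> L1"
  shows "cycle_rank V (path_edges p1 \<union> path_edges p2) \<ge> 1"
proof -
  have "cycle_rank V (path_edges p2) + 1 \<le> cycle_rank V (path_edges p2 \<union> path_edges p1)"
  proof (rule cycle_rank_add_walk)
    show "simple_graph V (path_edges p2 \<union> path_edges p1)"
      using simple_graph_subset[OF assms(1)] unfolding edges by blast
    show "card (path_edges p1) = length p1 - 1" by (rule card_path_edges1_eq_length)
    show "(hd p1, last p1) \<in> conn_rel V (path_edges p2)" by (rule ends_conn_rel_path_edges2)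
    show "\<not> path_edges p1 \<subseteq> path_edges p2"
    proof
      assume "path_edges p1 \<subseteq> path_edges p2"
      then have "path_edges p1 = {}" using disjoint_path_edges(1) by blast
      then show False using assms(2) card_path_edges(1) by simp
    qed
  qed
  moreover have "cycle_rank V (path_edges p2) \<ge> 0"
    using cycle_rank_nonneg simple_graph_subset[OF assms(1)] unfolding edges by blast
  ultimately show ?thesis by (simp add: Un_commute)
qed

lemma density_le_if_missing_path_edge1:
  assumes sg: "simple_graph V E" and cr: "cycle_rank V E = 2" and len: "L1 \<le> L2 + L3"
    and A: "A \<subseteq> E" "A \<noteq> {}" and e: "e \<in> path_edges p1" "e \<notin> A"
  shows "density V A \<le> density V E"
proof -
  have sgA: "simple_graph V A" using simple_graph_subset[OF sg A(1)] .
  have "cycle_rank V A \<le> cycle_rank V (E - {e})"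
    using A e by (intro cycle_rank_mono[OF simple_graph_subset[OF sg]]) auto
  then have le1: "card A \<le> grank V A + 1"
    using cycle_rank_remove_edge[OF e(1)] cr unfolding cycle_rank_def by simp
  have "card E \<le> 2 * card A \<or> card A \<le> grank V A"
  proof (cases "path_edges p2 \<union> path_edges p3 \<subseteq> A")
    case True
    then have "L2 + L3 \<le> card A"
      using card_mono[OF finite_subset[OF A(1) finite_edges] True] card_path_edges disjoint_path_edges
      by (simp add: card_Un_disjoint)
    then show ?thesis using card_edges len by linarith
  next
    case False
    then obtain e' where e': "e' \<in> path_edges p2 \<union> path_edges p3" "e' \<notin> A" by blast
    have "cycle_rank V (E - {e} - {e'}) = 0"
      using e'(1) cycle_rank_remove_two_edges[OF e(1)]
        theta_graph.cycle_rank_remove_two_edges[OF swap23 e(1)] cr by auto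
    moreover have "cycle_rank V A \<le> cycle_rank V (E - {e} - {e'})"
      using A e e' by (intro cycle_rank_mono[OF simple_graph_subset[OF sg]]) auto
    ultimately show ?thesis unfolding cycle_rank_def by simp
  qed
  moreover have "card E \<ge> 3"
    using grank_pos[OF sg] A cr unfolding cycle_rank_def by fastforce
  moreover have "grank V A \<ge> 1" using grank_pos[OF sgA A(2)] .
  ultimately show ?thesis
    using ratio_le_ratio_minus_two[OF _ le1] density_eq_if_cycle_rank_2[OF cr]
    unfolding density_def by simp
qed

lemma uniformly_dense_if_triangle:
  assumes "simple_graph V E" "cycle_rank V E = 2"
    and "L1 \<le> L2 + L3" "L2 \<le> L1 + L3" "L3 \<le> L1 + L2"
  shows "uniformly_dense V E"
  unfolding uniformly_dense_def
proof (intro allI impI)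
  fix A assume A: "A \<subseteq> E" "A \<noteq> {}"
  show "density V A \<le> density V E"
  proof (cases "A = E")
    case False
    then obtain e where "e \<in> E" "e \<notin> A" using A by blast
    then consider "e \<in> path_edges p1" | "e \<in> path_edges p2" | "e \<in> path_edges p3"
      unfolding edges by blast
    then show ?thesis
    proof cases
      case 1
      then show ?thesis using density_le_if_missing_path_edge1 assms A \<open>e \<notin> A\<close> by blast
    next
      case 2
      then show ?thesis
        using theta_graph.density_le_if_missing_path_edge1[OF swap12] assms A \<open>e \<notin> A\<close> by simp
    next
      case 3
      then show ?thesis
        using theta_graph.density_le_if_missing_path_edge1[OF swap23[THEN theta_graph.swap12]]
          assms A \<open>e \<notin> A\<close> by simp
    qed
  qed simp
qed

end

lemma three_path_graph_swap12: "three_path_graph V E L1 L2 L3 \<Longrightarrow> three_path_graph V E L2 L1 L3"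
  and three_path_graph_swap23: "three_path_graph V E L1 L2 L3 \<Longrightarrow> three_path_graph V E L1 L3 L2"
  unfolding three_path_graph_iff_theta_graph by (blast dest: theta_graph.swap12 theta_graph.swap23)+

lemma three_path_graph_imp_uniformly_dense:
  assumes "simple_graph V E" "cycle_rank V E = 2"
    and "three_path_graph V E L1 L2 L3" "L1 \<le> L2" "L2 \<le> L3" "L3 - L2 \<le> L1"
  shows "uniformly_dense V E"
proof -
  obtain s t p1 p2 p3 where T: "theta_graph V E s t p1 p2 p3 L1 L2 L3"
    using assms(3) unfolding three_path_graph_iff_theta_graph by blast
  have "L1 \<le> L2 + L3" "L2 \<le> L1 + L3" "L3 \<le> L1 + L2"
    using assms(4-6) by linarith+
  then show ?thesis
    using theta_graph.uniformly_dense_if_triangle[OF T assms(1,2)] by blast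
qed

section \<open>Uniformly dense graphs of cycle rank two\<close>

lemma uniformly_denseD:
  "uniformly_dense V E \<Longrightarrow> A \<subseteq> E \<Longrightarrow> A \<noteq> {} \<Longrightarrow> density V A \<le> density V E"
  unfolding uniformly_dense_def by blast

lemma uniformly_dense_no_bridge:
  assumes sg: "simple_graph V E" and ud: "uniformly_dense V E" and pos: "cycle_rank V E > 0"
    and e: "e \<in> E" "e = {u, v}"
  shows "(u, v) \<in> conn_rel V (E - {e})"
proof (rule ccontr)
  assume disconnected: "(u, v) \<notin> conn_rel V (E - {e})"
  have finE: "finite E" using simple_graph_finite_edges[OF sg] .
  have uv: "u \<in> V" "v \<in> V"
    using e simple_graph_Union_subset[OF sg] by auto
  define m r where "m = card (E - {e})" and "r = grank V (E - {e})"
  have rE: "grank V E = r + 1"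
    using grank_insert_disconnected[OF _ uv disconnected] sg e unfolding r_def simple_graph_def
    by (simp add: insert_absorb)
  have mE: "card E = m + 1" using card_Suc_Diff1[OF finE e(1)] unfolding m_def by simp
  have "r < m" using pos rE mE unfolding cycle_rank_def by simp
  then have "E - {e} \<noteq> {}" unfolding m_def by (metis card.empty less_zeroE)
  then have "r \<ge> 1"
    unfolding r_def by (rule grank_pos[OF simple_graph_subset[OF sg Diff_subset]])
  have "density V (E - {e}) \<le> density V E"
    using uniformly_denseD[OF ud Diff_subset \<open>E - {e} \<noteq> {}\<close>] .
  then have "real m / real r \<le> (real m + 1) / (real r + 1)"
    unfolding density_def rE mE m_def r_def by (simp add: add.commute)
  then have "real m * (real r + 1) \<le> (real m + 1) * real r"
    using \<open>r \<ge> 1\<close> by (simp add: divide_simps)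
  with \<open>r < m\<close> show False by (simp add: algebra_simps)
qed

lemma uniformly_dense_cycle_rank_proper_subset:
  assumes sg: "simple_graph V E" and ud: "uniformly_dense V E" and pos: "cycle_rank V E > 0"
    and H: "H \<subseteq> E" "H \<noteq> E"
  shows "cycle_rank V H \<le> cycle_rank V E - 1"
proof -
  obtain g where g: "g \<in> E" "g \<notin> H" using H by blast
  then obtain u v where "g = {u, v}" using sg by (blast elim: simple_graph_edgeE)
  then have "cycle_rank V (E - {g}) = cycle_rank V E - 1"
    using cycle_rank_remove_nonbridge[OF simple_graph_finite_edges[OF sg] g(1)]
      uniformly_dense_no_bridge[OF sg ud pos g(1)] by blast
  moreover have "cycle_rank V H \<le> cycle_rank V (E - {g})"
    using H g by (intro cycle_rank_mono[OF simple_graph_subset[OF sg Diff_subset]]) auto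
  ultimately show ?thesis by simp
qed

lemma exists_cycle_through_edge:
  assumes "{a, b} \<in> E" "a \<noteq> b" "(a, b) \<in> conn_rel V (E - {{a, b}})"
  obtains P where "distinct P" "length P \<ge> 3" "hd P = a" "cycle_edges P \<subseteq> E"
proof -
  obtain P where P: "P \<noteq> []" "hd P = a" "last P = b" "distinct P" "path_edges P \<subseteq> E - {{a, b}}"
    using conn_rel_distinct_path[OF assms(3)] by blast
  have "length P \<ge> 3"
  proof (cases P rule: remdups_adj.cases)
    case (3 x y zs)
    then show ?thesis using P by (cases zs) auto
  qed (use P assms(2) in auto)
  moreover have "cycle_edges P \<subseteq> E"
    unfolding cycle_edges_def using P(2,3,5) assms(1) by auto
  ultimately show ?thesis using P that by blast
qed

lemma exists_edge_leaving:
  assumes "connected_graph V E" "C \<subseteq> E" "C \<noteq> E" "\<Union>C \<subseteq> W" "a \<in> W" "W \<subseteq> V"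
    and "simple_graph V E"
  obtains x y where "{x, y} \<in> E - C" "x \<in> W"
proof -
  obtain u v where uv: "{u, v} \<in> E - C" "u \<in> V"
    using assms(2,3,7) by (blast elim: simple_graph_edgeE)
  show ?thesis
  proof (cases "u \<in> W \<or> v \<in> W")
    case True
    then show ?thesis using that uv(1) by (metis insert_commute)
  next
    case False
    have "(a, u) \<in> conn_rel V E"
      using connected_graph_conn_rel[OF assms(1)] assms(5,6) uv(2) by blast
    then obtain x y where "{x, y} \<in> E" "x \<in> W" "y \<notin> W"
      using conn_rel_leaves_set assms(5) False by metis
    moreover have "{x, y} \<notin> C" using assms(4) \<open>y \<notin> W\<close> by blast
    ultimately show ?thesis using that by blast
  qed
qed

lemma exists_ear:
  assumes sg: "simple_graph V E" and conn: "connected_graph V E"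
    and no_bridge: "\<And>e u v. e \<in> E \<Longrightarrow> e = {u, v} \<Longrightarrow> (u, v) \<in> conn_rel V (E - {e})"
    and C: "C \<subseteq> E" "C \<noteq> E" "\<Union>C \<subseteq> W" "a \<in> W" "W \<subseteq> V"
  obtains Q x z L where "path_piece Q x z L" "1 \<le> L" "x \<in> W" "z \<in> W"
    "inner_verts Q \<inter> W = {}" "card (path_edges Q) = L" "path_edges Q \<subseteq> E"
    "C \<inter> path_edges Q = {}"
proof -
  obtain x y where g: "{x, y} \<in> E - C" "x \<in> W"
    by (rule exists_edge_leaving[OF conn C sg])
  have yx: "(y, x) \<in> conn_rel V (E - {{x, y}})"
    using g(1) by (intro no_bridge) (auto simp: doubleton_eq_iff)
  obtain R where R: "R \<noteq> []" "hd R = y" "last R = x" "distinct R"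
    "path_edges R \<subseteq> E - {{x, y}}"
    using conn_rel_distinct_path[OF yx] by blast
  have "\<exists>w \<in> set R. w \<in> W" using R(1,3) g(2) last_in_set by metis
  then obtain R1 z R2 where Rs: "R = R1 @ z # R2" "z \<in> W" "\<forall>w \<in> set R1. w \<notin> W"
    by (rule split_list_first_propE)
  \<comment> \<open>the ear: the edge \<open>{x, y}\<close>, then \<open>R\<close> up to its first return to \<open>W\<close>\<close>
  define Q where "Q = x # R1 @ [z]"
  have dist: "distinct (R1 @ [z])" using R(4) Rs(1) by simp
  have R1z_edges: "path_edges (R1 @ [z]) \<subseteq> E - {{x, y}}"
    using R(5) Rs(1) path_edges_append_Cons[of R1 z R2] by auto
  have "hd (R1 @ [z]) = y" using R(2) Rs(1) by (cases R1) auto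
  then have edgesQ: "path_edges Q = insert {x, y} (path_edges (R1 @ [z]))"
    unfolding Q_def using path_edges_Cons[of "R1 @ [z]" x] by simp
  show ?thesis
  proof (rule that)
    show "path_piece Q x z (length R1 + 1)"
      unfolding path_piece_def Q_def using dist g(2) Rs(3) by auto
    show "inner_verts Q \<inter> W = {}"
      unfolding inner_verts_def Q_def using Rs(3) by auto
    show "card (path_edges Q) = length R1 + 1"
      unfolding edgesQ using card_path_edges_distinct[OF dist] R1z_edges
      by (auto simp: card_insert_if)
    show "path_edges Q \<subseteq> E"
      unfolding edgesQ using R1z_edges g(1) by auto
    have "e \<notin> C" if "e \<in> path_edges (R1 @ [z])" for e
      using path_edge_snoc_meets[OF that] Rs(3) C(3) by blast
    then show "C \<inter> path_edges Q = {}"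
      unfolding edgesQ using g(1) by blast
  qed (use g(2) Rs(2) in auto)
qed

lemma theta_graph_of_cycle_and_ear_at_hd:
  assumes P: "distinct P" "card (cycle_edges P) = length P" "z \<in> set P"
    and Q: "path_piece Q (hd P) z LQ" "inner_verts Q \<inter> set P = {}"
      "card (path_edges Q) = LQ" "cycle_edges P \<inter> path_edges Q = {}"
  shows "\<exists>p1 p2 L1 L2. theta_graph (set P \<union> set Q) (cycle_edges P \<union> path_edges Q)
    (hd P) z p1 p2 Q L1 L2 LQ \<and> 1 \<le> L2"
proof -
  let ?x = "hd P"
  obtain \<delta> \<gamma> where P_split: "P = \<delta> @ z # \<gamma>" using split_list[OF P(3)] by blast
  \<comment> \<open>\<open>p2\<close> leaves \<open>hd P\<close> by the closing edge and runs backwards along \<open>P\<close>; if \<open>z = hd P\<close>,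
    then \<open>p1 = [z]\<close> has length 0 and \<open>p2\<close> is the whole cycle\<close>
  define p1 where "p1 = \<delta> @ [z]"
  define p2 where "p2 = ?x # rev \<gamma> @ [z]"
  have x_pos: "(\<delta> = [] \<and> ?x = z) \<or> (\<delta> \<noteq> [] \<and> hd \<delta> = ?x)"
    using P_split by (cases \<delta>) auto
  have dist: "distinct \<delta>" "distinct \<gamma>" "z \<notin> set \<delta>" "z \<notin> set \<gamma>" "set \<delta> \<inter> set \<gamma> = {}"
    using P(1) P_split by auto
  have x_notin: "?x \<notin> set (tl \<delta>)" "?x \<notin> set \<gamma>"
    using x_pos dist by (cases \<delta>; auto)+
  have inner1: "butlast (tl p1) = tl \<delta>"
    unfolding p1_def by (cases \<delta>) auto
  have inner2: "butlast (tl p2) = rev \<gamma>"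
    unfolding p2_def by (simp add: butlast_append)
  have tl_sub: "set (tl \<delta>) \<subseteq> set \<delta>" by (cases \<delta>) auto
  have path1: "path_piece p1 ?x z (length \<delta>)"
    unfolding path_piece_def inner1 using x_pos dist x_notin tl_sub unfolding p1_def
    by (auto simp: distinct_tl)
  have path2: "path_piece p2 ?x z (length \<gamma> + 1)"
    unfolding path_piece_def inner2 using dist x_notin unfolding p2_def by auto
  have "cycle_edges P = path_edges p1 \<union> path_edges p2"
    unfolding p1_def p2_def using cycle_edges_split[OF P_split] .
  moreover have "set P \<union> set Q = set p1 \<union> set p2 \<union> set Q"
    unfolding p1_def p2_def P_split using hd_in_set[of P] P_split by auto
  moreover have "card (cycle_edges P \<union> path_edges Q) = length \<delta> + (length \<gamma> + 1) + LQ"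
    using card_Un_disjoint[OF _ _ Q(4)] P(2) Q(3) P_split unfolding cycle_edges_def by simp
  moreover have "inner_verts p1 \<inter> inner_verts p2 = {}" "inner_verts p1 \<inter> inner_verts Q = {}"
    "inner_verts p2 \<inter> inner_verts Q = {}"
    unfolding inner_verts_def inner1 inner2 using dist tl_sub Q(2) P_split
    by (auto simp: inner_verts_def)
  ultimately have "theta_graph (set P \<union> set Q) (cycle_edges P \<union> path_edges Q)
      ?x z p1 p2 Q (length \<delta>) (length \<gamma> + 1) LQ"
    unfolding theta_graph_def using path1 path2 Q(1) by simp
  moreover have "1 \<le> length \<gamma> + 1" by simp
  ultimately show ?thesis by blast
qed

lemma theta_graph_of_cycle_and_ear:
  assumes P: "distinct P" "card (cycle_edges P) = length P" "x \<in> set P" "z \<in> set P"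
    and Q: "path_piece Q x z LQ" "inner_verts Q \<inter> set P = {}"
      "card (path_edges Q) = LQ" "cycle_edges P \<inter> path_edges Q = {}"
  shows "\<exists>p1 p2 L1 L2. theta_graph (set P \<union> set Q) (cycle_edges P \<union> path_edges Q)
    x z p1 p2 Q L1 L2 LQ \<and> 1 \<le> L2"
proof -
  obtain \<alpha> \<beta> where P_split: "P = \<alpha> @ x # \<beta>" using split_list[OF P(3)] by blast
  define P' where "P' = x # \<beta> @ \<alpha>"
  have "cycle_edges P' = cycle_edges P"
    unfolding P'_def P_split using cycle_edges_rotate[of \<alpha> "x # \<beta>"] by (cases "\<alpha> = []") auto
  moreover have "set P' = set P" "length P' = length P" "distinct P'" "hd P' = x"
    using P(1) unfolding P'_def P_split by auto
  ultimately show ?thesis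
    using theta_graph_of_cycle_and_ear_at_hd[of P' z Q LQ] P Q by simp
qed

lemma cycle_rank_cycle_plus_ear:
  assumes sg: "simple_graph V (cycle_edges P \<union> path_edges Q)" and P: "distinct P" "length P \<ge> 3"
    and Q: "path_piece Q x z L" "1 \<le> L" "x \<in> set P" "z \<in> set P" "card (path_edges Q) = L"
      "cycle_edges P \<inter> path_edges Q = {}"
  shows "cycle_rank V (cycle_edges P \<union> path_edges Q) \<ge> 2"
proof -
  let ?C = "cycle_edges P"
  have sgC: "simple_graph V ?C" using simple_graph_subset[OF sg] by blast
  have "set P \<subseteq> V"
    using Union_cycle_edges[of P] simple_graph_Union_subset[OF sgC] P(2) by simp
  have "cycle_rank V ?C + 1 \<le> cycle_rank V (?C \<union> path_edges Q)"
  proof (rule cycle_rank_add_walk[OF sg])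
    show "card (path_edges Q) = length Q - 1"
      using Q(1,5) unfolding path_piece_def by simp
    have "path_edges P \<subseteq> ?C" unfolding cycle_edges_def by blast
    then have "(x, z) \<in> conn_rel V ?C"
      using conn_rel_walk_vertices[OF Q(3,4) \<open>set P \<subseteq> V\<close>] by blast
    then show "(hd Q, last Q) \<in> conn_rel V ?C"
      using Q(1) unfolding path_piece_def by simp
    have "path_edges Q \<noteq> {}" using Q(2,5) by auto
    then show "\<not> path_edges Q \<subseteq> ?C" using Q(6) by blast
  qed
  with one_le_cycle_rank_cycle_edges[OF sgC P] show ?thesis by simp
qed

lemma uniformly_dense_imp_theta_graph:
  assumes sg: "simple_graph V E" and conn: "connected_graph V E" and cr: "cycle_rank V E = 2"
    and ud: "uniformly_dense V E"
  obtains s t p1 p2 p3 L1 L2 L3 where "theta_graph V E s t p1 p2 p3 L1 L2 L3" "1 \<le> L2" "1 \<le> L3"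
proof -
  have pos: "cycle_rank V E > 0" using cr by simp
  note no_bridge = uniformly_dense_no_bridge[OF sg ud pos]
  have "E \<noteq> {}" using cr unfolding cycle_rank_def by auto
  then obtain a b where ab: "{a, b} \<in> E" "a \<noteq> b"
    using sg by (blast elim: simple_graph_edgeE)
  obtain P where P: "distinct P" "length P \<ge> 3" "hd P = a" and CE: "cycle_edges P \<subseteq> E"
    using exists_cycle_through_edge[OF ab no_bridge[OF ab(1) refl]] by blast
  let ?C = "cycle_edges P"
  have V_eq: "V = \<Union>E" using connected_graph_Union_edges[OF sg conn \<open>E \<noteq> {}\<close>] by simp
  have P_eq: "set P = \<Union>?C" using Union_cycle_edges[of P] P(2) by simp
  have "P \<noteq> []" using P(2) by auto
  then have "a \<in> set P" using P(3) by auto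
  have "?C \<noteq> E"
  proof
    assume "?C = E"
    then have "cycle_rank V E = 1"
      using cycle_rank_connected_cycle[OF _ _ P(1,2)] conn V_eq P_eq by simp
    with cr show False by simp
  qed
  then obtain Q x z L where Q: "path_piece Q x z L" "1 \<le> L" "x \<in> set P" "z \<in> set P"
    "inner_verts Q \<inter> set P = {}" "card (path_edges Q) = L" "path_edges Q \<subseteq> E"
    "?C \<inter> path_edges Q = {}"
    using exists_ear[OF sg conn no_bridge CE _ _ \<open>a \<in> set P\<close>] V_eq P_eq CE by blast
  have "cycle_rank V (?C \<union> path_edges Q) \<ge> 2"
    using cycle_rank_cycle_plus_ear[OF simple_graph_subset[OF sg] P(1,2) Q(1-4,6,8)] CE Q(7)
    by blast
  then have E_eq: "E = ?C \<union> path_edges Q"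
    using uniformly_dense_cycle_rank_proper_subset[OF sg ud pos, of "?C \<union> path_edges Q"]
      CE Q(7) cr by fastforce
  have "length Q \<ge> 2" using Q(1,2) unfolding path_piece_def by simp
  then have "V = set P \<union> set Q"
    using V_eq P_eq Union_path_edges[of Q] unfolding E_eq by simp
  moreover obtain p1 p2 L1 L2 where
    "theta_graph (set P \<union> set Q) (?C \<union> path_edges Q) x z p1 p2 Q L1 L2 L" "1 \<le> L2"
    using theta_graph_of_cycle_and_ear[OF P(1) card_cycle_edges[OF P(1,2)] Q(3,4,1,5,6,8)]
    by blast
  ultimately show ?thesis using that Q(2) E_eq by metis
qed

context theta_graph
begin

lemma length_le_sum_if_uniformly_dense:
  assumes sg: "simple_graph V E" and ud: "uniformly_dense V E" and cr: "cycle_rank V E = 2"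
    and "1 \<le> L1 + L2"
  shows "L3 \<le> L1 + L2"
proof (rule ccontr)
  assume long: "\<not> L3 \<le> L1 + L2"
  define A where "A = path_edges p1 \<union> path_edges p2"
  have AE: "A \<subseteq> E" unfolding A_def edges by blast
  have card_A: "card A = L1 + L2"
    unfolding A_def using card_Un_disjoint[OF _ _ disjoint_path_edges(1)] card_path_edges by simp
  have "A \<noteq> E" using card_A card_edges long by auto
  have "A \<noteq> {}" using card_A assms(4) by auto
  have rank_A: "grank V A + 1 = card A"
  proof -
    have "cycle_rank V A \<ge> 1"
      using one_le_cycle_rank_two_paths theta_graph.one_le_cycle_rank_two_paths[OF swap12] assms(1,4)
      unfolding A_def by (cases "1 \<le> L1") (auto simp: Un_commute)
    moreover have "cycle_rank V A \<le> 1"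
      using uniformly_dense_cycle_rank_proper_subset[OF sg ud _ AE \<open>A \<noteq> E\<close>] cr by simp
    ultimately show ?thesis unfolding cycle_rank_def by simp
  qed
  have "grank V A \<ge> 1"
    using grank_pos[OF simple_graph_subset[OF sg AE] \<open>A \<noteq> {}\<close>] .
  have "card E \<ge> 3" using card_edges long assms(4) by linarith
  have "real (card A) / (real (card A) - 1) \<le> real (card E) / (real (card E) - 2)"
  proof -
    have "density V A = real (card A) / (real (card A) - 1)"
      unfolding density_def rank_A[symmetric] by simp
    moreover have "density V E = real (card E) / (real (card E) - 2)"
      using density_eq_if_cycle_rank_2[OF cr] \<open>card E \<ge> 3\<close> by (simp add: of_nat_diff)
    ultimately show ?thesis using uniformly_denseD[OF ud AE \<open>A \<noteq> {}\<close>] by simp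
  qed
  moreover have "real (card A) - 1 > 0" "real (card E) - 2 > 0"
    using rank_A \<open>grank V A \<ge> 1\<close> \<open>card E \<ge> 3\<close> by linarith+
  ultimately have "real (card A) * (real (card E) - 2) \<le> real (card E) * (real (card A) - 1)"
    by (simp add: divide_simps)
  then have "card E \<le> 2 * card A" by (simp add: algebra_simps flip: of_nat_mult of_nat_le_iff)
  with card_A card_edges long show False by linarith
qed

end

lemma sorted_triple_exists:
  fixes a b c :: "'a :: linorder"
  assumes "P a b c" "\<And>x y z. P x y z \<Longrightarrow> P y x z" "\<And>x y z. P x y z \<Longrightarrow> P x z y"
  shows "\<exists>x y z. P x y z \<and> x \<le> y \<and> y \<le> z"
  using assms by (metis linear)

lemma uniformly_dense_imp_three_path_graph:
  assumes sg: "simple_graph V E" and conn: "connected_graph V E" and cr: "cycle_rank V E = 2"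
    and ud: "uniformly_dense V E"
  shows "\<exists>L1 L2 L3. three_path_graph V E L1 L2 L3 \<and> L1 \<le> L2 \<and> L2 \<le> L3 \<and> L3 - L2 \<le> L1"
proof -
  obtain s t p1 p2 p3 L1 L2 L3 where T: "theta_graph V E s t p1 p2 p3 L1 L2 L3"
    and L: "1 \<le> L2" "1 \<le> L3"
    using uniformly_dense_imp_theta_graph[OF assms] by blast
  let ?triangle = "\<lambda>L1 L2 L3. three_path_graph V E L1 L2 L3 \<and>
    L1 \<le> L2 + L3 \<and> L2 \<le> L1 + L3 \<and> L3 \<le> L1 + L2"
  have "L3 \<le> L1 + L2"
    using theta_graph.length_le_sum_if_uniformly_dense[OF T sg ud cr] L by simp
  moreover have "L2 \<le> L1 + L3"
    using theta_graph.length_le_sum_if_uniformly_dense[OF theta_graph.swap23[OF T] sg ud cr] L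
    by simp
  moreover have "L1 \<le> L2 + L3"
    using theta_graph.length_le_sum_if_uniformly_dense[OF
        theta_graph.swap23[OF theta_graph.swap12[OF T]] sg ud cr] L
    by simp
  ultimately have "?triangle L1 L2 L3"
    using T three_path_graph_iff_theta_graph by blast
  moreover have "?triangle y x z" "?triangle x z y" if "?triangle x y z" for x y z
    using that three_path_graph_swap12 three_path_graph_swap23 by auto
  ultimately obtain L1' L2' L3' where "?triangle L1' L2' L3'" "L1' \<le> L2'" "L2' \<le> L3'"
    using sorted_triple_exists[of ?triangle] by blast
  then show ?thesis by (intro exI[of _ L1'] exI[of _ L2'] exI[of _ L3']) auto
qed

theorem theorem3p10:
  fixes V :: "'a set" and E :: "'a set set"
  assumes "simple_graph V E" and "connected_graph V E" and "cycle_rank V E = 2"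
  shows "uniformly_dense V E \<longleftrightarrow>
    (\<exists>L1 L2 L3 :: nat. three_path_graph V E L1 L2 L3 \<and>
        L1 \<le> L2 \<and> L2 \<le> L3 \<and> L3 - L2 \<le> L1)"
  using uniformly_dense_imp_three_path_graph[OF assms] three_path_graph_imp_uniformly_dense[OF assms(1,3)]
  by blast

end
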